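(* Let $\mathtt{InpEqSize}=\{(G,\mathbf{x}): \mathbf{x}(v)=|V(G)|\ \text{for every } v\in V(G)\}$, where $\mathbf{x}(v)$ is the binary encoding of an integer. Then $\mathtt{InpEqSize}\notin\mathrm{NLD}(t)$ for every time bound $t=o(n)$.
   Context: Configurations are pairs $(G,\mathbf{x})$ with $G$ a finite connected graph and $\mathbf{x}:V(G)\to\{0,1\}^*$. A distributed language is a decidable set of configurations. Model: synchronous LOCAL model. Nodes have distinct identities given by an injective $\mathrm{Id}:V(G)\to\mathbb{N}$ and unbounded messages. After $r$ rounds a node knows exactly its radius-$r$ ball (identities, inputs, certificates, adjacencies). A time bound $t$ is a function of $(G,\mathbf{x},\mathrm{Id})$, non-decreasing under taking connected induced subgraphs with restricted inputs and identities. $t=o(n)$ means $t(G,\mathbf{x},\mathrm{Id})\le g(|V(G)|)$ for some $g$ with $g(n)/n\to0$. A verification algorithm receives, besides $(G,\mathbf{x})$ and $\mathrm{Id}$, a certificate $\mathbf{y}(v)\in\{0,1\}^*$ at each node. It verifies $\mathcal{L}$ if: - for every $(G,\mathbf{x})\in\mathcal{L}$ there is a certificate $\mathbf{y}$ (depending only on $(G,\mathbf{x})$) such that for every identity assignment all nodes output "yes"; - for every $(G,\mathbf{x})\notin\mathcal{L}$, for every certificate and every identity assignment, some node outputs "no". $\mathrm{NLD}(t)$ is the class of languages verifiable by a verification algorithm running in time $t$. *)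

theory Defs
  imports Complex_Main
begin

text \<open>Graphs have vertices in nat (every finite graph is isomorphic to one of these).\<close>

type_synonym bits = "bool list"
type_synonym config = "nat set \<times> (nat \<times> nat) set \<times> (nat \<Rightarrow> bits)"

definition is_graph :: "nat set \<Rightarrow> (nat \<times> nat) set \<Rightarrow> bool" where
  "is_graph V E \<longleftrightarrow> finite V \<and> V \<noteq> {} \<and> E \<subseteq> V \<times> V \<and> sym E \<and> irrefl E
     \<and> (\<forall>u\<in>V. \<forall>w\<in>V. (u, w) \<in> E\<^sup>*)"

definition ball_r :: "nat set \<Rightarrow> (nat \<times> nat) set \<Rightarrow> nat \<Rightarrow> nat \<Rightarrow> nat set" where
  "ball_r V E v r = {u \<in> V. \<exists>k \<le> r. (v, u) \<in> E ^^ k}"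

text \<open>What node v knows after r rounds: the round number, its own identity, and the
radius-r ball (identities, inputs, certificates, adjacencies), described via identities.\<close>
type_synonym view = "nat \<times> nat \<times> (nat \<times> bits \<times> bits) set \<times> (nat \<times> nat) set"

definition view_of :: "nat set \<Rightarrow> (nat \<times> nat) set \<Rightarrow> (nat \<Rightarrow> bits) \<Rightarrow> (nat \<Rightarrow> bits)
    \<Rightarrow> (nat \<Rightarrow> nat) \<Rightarrow> nat \<Rightarrow> nat \<Rightarrow> view" where
  "view_of V E x y ids v r =
     (let B = ball_r V E v r in
      (r, ids v, (\<lambda>u. (ids u, x u, y u)) ` B,
       {(ids u, ids w) | u w. u \<in> B \<and> w \<in> B \<and> (u, w) \<in> E}))"

text \<open>A (deterministic LOCAL) algorithm: a stopping rule and an output rule on views.\<close>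
definition output_of :: "(view \<Rightarrow> bool) \<Rightarrow> (view \<Rightarrow> bool) \<Rightarrow> nat set \<Rightarrow> (nat \<times> nat) set
    \<Rightarrow> (nat \<Rightarrow> bits) \<Rightarrow> (nat \<Rightarrow> bits) \<Rightarrow> (nat \<Rightarrow> nat) \<Rightarrow> nat \<Rightarrow> bool" where
  "output_of halt out V E x y ids v =
     out (view_of V E x y ids v (LEAST r. halt (view_of V E x y ids v r)))"

type_synonym time_fn = "nat set \<Rightarrow> (nat \<times> nat) set \<Rightarrow> (nat \<Rightarrow> bits) \<Rightarrow> (nat \<Rightarrow> nat) \<Rightarrow> nat"

definition time_bound :: "time_fn \<Rightarrow> bool" where
  "time_bound t \<longleftrightarrow>
     (\<forall>V E x ids V' x' ids'. is_graph V E \<and> inj_on ids V \<and> V' \<subseteq> V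
        \<and> is_graph V' (E \<inter> (V' \<times> V'))
        \<and> (\<forall>v\<in>V'. x' v = x v \<and> ids' v = ids v)
        \<longrightarrow> t V' (E \<inter> (V' \<times> V')) x' ids' \<le> t V E x ids)"

definition sublinear :: "time_fn \<Rightarrow> bool" where
  "sublinear t \<longleftrightarrow>
     (\<exists>g :: nat \<Rightarrow> real. (\<lambda>n. g n / real n) \<longlonglongrightarrow> 0 \<and>
        (\<forall>V E x ids. is_graph V E \<and> inj_on ids V \<longrightarrow> real (t V E x ids) \<le> g (card V)))"

definition verifies :: "(view \<Rightarrow> bool) \<Rightarrow> (view \<Rightarrow> bool) \<Rightarrow> time_fn \<Rightarrow> config set \<Rightarrow> bool" where
  "verifies halt out t L \<longleftrightarrow>
     (\<forall>V E x y ids. is_graph V E \<and> inj_on ids V \<longrightarrow>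
        (\<forall>v\<in>V. \<exists>r \<le> t V E x ids. halt (view_of V E x y ids v r)))
   \<and> (\<forall>V E x. is_graph V E \<and> (V, E, x) \<in> L \<longrightarrow>
        (\<exists>y. \<forall>ids. inj_on ids V \<longrightarrow> (\<forall>v\<in>V. output_of halt out V E x y ids v)))
   \<and> (\<forall>V E x. is_graph V E \<and> (V, E, x) \<notin> L \<longrightarrow>
        (\<forall>y ids. inj_on ids V \<longrightarrow> (\<exists>v\<in>V. \<not> output_of halt out V E x y ids v)))"

definition NLD :: "time_fn \<Rightarrow> config set set" where
  "NLD t = {L. \<exists>halt out. verifies halt out t L}"

fun bin :: "nat \<Rightarrow> bits" where
  "bin n = (if n < 2 then [odd n] else bin (n div 2) @ [odd n])"

definition InpEqSize :: "config set" where
  "InpEqSize = {(V, E, x). is_graph V E \<and> (\<forall>v\<in>V. x v = bin (card V))}"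

end

theory Submission
  imports Defs
begin

(* Proof idea (fooling by a covering map). Let n \<ge> 3 be so large that the verifier
   halts within K = (n - 1) div 4 rounds on the n-cycle C(n), so 2K + 1 < n.  Labelled
   with x = bin n, the cycle C(n) is a yes-instance, so some certificate y makes every
   node accept under every identity assignment.  The doubled cycle C(2n) with the same
   input x is a no-instance; give it the lifted certificate y(u mod n) and identities id.
   Some node v must reject.  But reduction modulo n is a covering map C(2n) \<rightarrow> C(n)
   which is an isomorphism on radius-K balls, so with suitably transported identities
   v mod n in C(n) has the same view as v for K rounds, halts within them, and accepts:
   contradiction. *)

text \<open>The recursion equation of bin would unfold indefinitely on symbolic arguments.\<close>
declare bin.simps[simp del]

definition cycle :: "nat \<Rightarrow> (nat \<times> nat) set" where
  "cycle m = {(i, j). i < m \<and> j < m \<and> (j = Suc i mod m \<or> i = Suc j mod m)}"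

lemma sym_cycle: "sym (cycle m)"
  by (auto simp: cycle_def sym_def)

lemma cycle_is_graph:
  assumes "3 \<le> m"
  shows "is_graph {..<m} (cycle m)"
proof -
  have from_0: "(0, i) \<in> (cycle m)\<^sup>*" if "i < m" for i
    using that
  proof (induction i)
    case 0 then show ?case by simp
  next
    case (Suc i)
    then have "(i, Suc i) \<in> cycle m" by (simp add: cycle_def)
    with Suc show ?case by (meson Suc_lessD rtrancl.rtrancl_into_rtrancl)
  qed
  have connected: "(u, w) \<in> (cycle m)\<^sup>*" if "u < m" "w < m" for u w
  proof -
    have "(u, 0) \<in> (cycle m)\<^sup>*"
      using from_0[OF that(1)] sym_rtrancl[OF sym_cycle] by (meson symD)
    then show ?thesis using from_0[OF that(2)] by simp
  qed
  have "i \<noteq> Suc i mod m" if "i < m" for i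
    using that assms by (cases "Suc i = m") auto
  then have "irrefl (cycle m)" by (auto simp: irrefl_def cycle_def)
  moreover have "0 \<in> {..<m}" using assms by simp
  ultimately show ?thesis
    unfolding is_graph_def using connected sym_cycle by (auto simp: cycle_def)
qed

lemma cycle_step_offset:
  assumes "(w, u) \<in> cycle m"
  shows "\<exists>e::int. \<bar>e\<bar> \<le> 1 \<and> int u = (int w + e) mod int m"
proof -
  from assms have u: "u < m" and "u = Suc w mod m \<or> w = Suc u mod m"
    by (auto simp: cycle_def)
  then consider "u = Suc w mod m" | "w = Suc u mod m" by blast
  then show ?thesis
  proof cases
    case 1
    then have "int u = (int w + 1) mod int m" by (simp add: zmod_int add.commute)
    then show ?thesis by (intro exI[of _ 1]) simp
  next
    case 2
    then have "int w = (int u + 1) mod int m" by (simp add: zmod_int add.commute)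
    then have "(int w - 1) mod int m = (int u + 1 - 1) mod int m"
      by (metis mod_diff_left_eq)
    then have "int u = (int w + (-1)) mod int m" using u by simp
    then show ?thesis by (intro exI[of _ "-1"]) simp
  qed
qed

lemma cycle_walk_offset:
  assumes "(v, u) \<in> cycle m ^^ k" "v < m"
  shows "u < m \<and> (\<exists>d::int. \<bar>d\<bar> \<le> int k \<and> int u = (int v + d) mod int m)"
  using assms(1)
proof (induction k arbitrary: u)
  case 0
  then show ?case using assms(2) by (intro conjI exI[of _ 0]) auto
next
  case (Suc k)
  from Suc.prems obtain w where w: "(v, w) \<in> cycle m ^^ k" "(w, u) \<in> cycle m"
    by (rule relpow_Suc_E)
  from Suc.IH[OF w(1)] obtain d where d: "\<bar>d\<bar> \<le> int k" "int w = (int v + d) mod int m"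
    by blast
  from cycle_step_offset[OF w(2)] obtain e where e: "\<bar>e\<bar> \<le> 1" "int u = (int w + e) mod int m"
    by blast
  have "int u = (int v + (d + e)) mod int m"
    using e(2) d(2) by (simp add: mod_add_left_eq add.assoc)
  moreover have "u < m" using w(2) by (simp add: cycle_def)
  ultimately show ?case using d(1) e(1) by (intro conjI exI[of _ "d + e"]) auto
qed

lemma Suc_mod_cancel:
  fixes x y n :: nat
  assumes "x < n" "y < n" "Suc x mod n = Suc y mod n"
  shows "x = y"
  using assms by (cases "Suc x = n"; cases "Suc y = n") auto

lemma cycle_cover_edge:
  assumes "(i, j) \<in> cycle (2 * n)" "0 < n"
  shows "(i mod n, j mod n) \<in> cycle n"
proof -
  have "Suc k mod (2 * n) mod n = Suc (k mod n) mod n" for k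
    by (simp add: mod_mod_cancel mod_Suc_eq)
  then show ?thesis using assms by (auto simp: cycle_def)
qed

lemma cycle_lift_edge:
  assumes "a < 2 * n" "(a mod n, b) \<in> cycle n"
  shows "\<exists>c. (a, c) \<in> cycle (2 * n) \<and> c mod n = b"
proof -
  from assms(2) have b: "b < n" and "b = Suc (a mod n) mod n \<or> a mod n = Suc b mod n"
    by (auto simp: cycle_def)
  then consider "b = Suc (a mod n) mod n" | "a mod n = Suc b mod n" by blast
  then show ?thesis
  proof cases
    case 1
    have "(a, Suc a mod (2 * n)) \<in> cycle (2 * n)" using assms(1) by (auto simp: cycle_def)
    moreover have "Suc a mod (2 * n) mod n = b" using 1 by (simp add: mod_mod_cancel mod_Suc_eq)
    ultimately show ?thesis by blast
  next
    case 2
    define c where "c = (a + 2 * n - 1) mod (2 * n)"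
    have pred: "Suc c mod (2 * n) = a"
      unfolding c_def using assms(1) add_gr_0 mod_Suc_eq by fastforce
    moreover have "c < 2 * n" using assms(1) by (simp add: c_def)
    ultimately have "(a, c) \<in> cycle (2 * n)" using assms(1) by (auto simp: cycle_def)
    moreover have "c mod n = b"
    proof -
      have "Suc (c mod n) mod n = Suc b mod n"
        using pred 2 by (metis mod_Suc_eq mod_add_self2 mod_double_nat mod_mod_trivial)
      moreover have "c mod n < n" using b by simp
      ultimately show ?thesis using Suc_mod_cancel b by blast
    qed
    ultimately show ?thesis by blast
  qed
qed

lemma cycle_cover_walk:
  assumes "(v, u) \<in> cycle (2 * n) ^^ k" "0 < n"
  shows "(v mod n, u mod n) \<in> cycle n ^^ k"
  using assms(1)
proof (induction k arbitrary: u)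
  case 0 then show ?case by simp
next
  case (Suc k)
  from Suc.prems obtain w where w: "(v, w) \<in> cycle (2 * n) ^^ k" "(w, u) \<in> cycle (2 * n)"
    by (rule relpow_Suc_E)
  show ?case using Suc.IH[OF w(1)] cycle_cover_edge[OF w(2) assms(2)] by (rule relpow_Suc_I)
qed

lemma cycle_lift_walk:
  assumes "(v mod n, w) \<in> cycle n ^^ k" "v < 2 * n"
  shows "\<exists>u. (v, u) \<in> cycle (2 * n) ^^ k \<and> u mod n = w"
  using assms(1)
proof (induction k arbitrary: w)
  case 0 then show ?case by auto
next
  case (Suc k)
  from Suc.prems obtain z where z: "(v mod n, z) \<in> cycle n ^^ k" "(z, w) \<in> cycle n"
    by (rule relpow_Suc_E)
  from Suc.IH[OF z(1)] obtain u where u: "(v, u) \<in> cycle (2 * n) ^^ k" "u mod n = z"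
    by blast
  have "u < 2 * n" using cycle_walk_offset[OF u(1) assms(2)] by blast
  from cycle_lift_edge[OF this] z(2) u(2) obtain c where "(u, c) \<in> cycle (2 * n)" "c mod n = w"
    by blast
  then show ?case using relpow_Suc_I[OF u(1)] by blast
qed

lemma cycle_cover_ball:
  assumes "v < 2 * n"
  shows "(\<lambda>u. u mod n) ` ball_r {..<2 * n} (cycle (2 * n)) v r = ball_r {..<n} (cycle n) (v mod n) r"
proof
  have "0 < n" using assms by simp
  then show "(\<lambda>u. u mod n) ` ball_r {..<2 * n} (cycle (2 * n)) v r \<subseteq> ball_r {..<n} (cycle n) (v mod n) r"
    using cycle_cover_walk by (fastforce simp: ball_r_def)
next
  show "ball_r {..<n} (cycle n) (v mod n) r \<subseteq> (\<lambda>u. u mod n) ` ball_r {..<2 * n} (cycle (2 * n)) v r"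
  proof
    fix w assume "w \<in> ball_r {..<n} (cycle n) (v mod n) r"
    then obtain k where k: "k \<le> r" "(v mod n, w) \<in> cycle n ^^ k" by (auto simp: ball_r_def)
    from cycle_lift_walk[OF k(2) assms] obtain u
      where u: "(v, u) \<in> cycle (2 * n) ^^ k" "u mod n = w" by blast
    have "u < 2 * n" using cycle_walk_offset[OF u(1) assms] by blast
    then have "u \<in> ball_r {..<2 * n} (cycle (2 * n)) v r" using u(1) k(1) by (auto simp: ball_r_def)
    then show "w \<in> (\<lambda>u. u mod n) ` ball_r {..<2 * n} (cycle (2 * n)) v r" using u(2) by blast
  qed
qed

text \<open>Inside a ball of radius K of C(2n), with 2K+1 < n, a displacement e (|e| \<le> 1)
  between the residues modulo n is the same displacement in C(2n): the ball is too small
  to wrap around C(n).\<close>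
lemma doubled_cycle_ball_offset:
  assumes small: "2 * K + 1 < n" and v: "v < 2 * n"
    and u: "u \<in> ball_r {..<2 * n} (cycle (2 * n)) v K"
    and w: "w \<in> ball_r {..<2 * n} (cycle (2 * n)) v K"
    and e: "\<bar>e\<bar> \<le> 1" "int (w mod n) = (int u + e) mod int n"
  shows "int w = (int u + e) mod int (2 * n)"
proof -
  have offset: "\<exists>d. \<bar>d\<bar> \<le> int K \<and> int z = (int v + d) mod int (2 * n)"
    if "z \<in> ball_r {..<2 * n} (cycle (2 * n)) v K" for z
  proof -
    from that obtain k where k: "k \<le> K" "(v, z) \<in> cycle (2 * n) ^^ k"
      by (auto simp: ball_r_def)
    then show ?thesis using cycle_walk_offset[OF k(2) v] by force
  qed
  obtain du where du: "\<bar>du\<bar> \<le> int K" "int u = (int v + du) mod int (2 * n)"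
    using offset[OF u] by blast
  obtain dw where dw: "\<bar>dw\<bar> \<le> int K" "int w = (int v + dw) mod int (2 * n)"
    using offset[OF w] by blast
  have halve: "(x mod int (2 * n) + c) mod int n = (x + c) mod int n" for x c :: int
    by (metis mod_add_left_eq mod_mod_cancel dvd_triv_right of_nat_mult of_nat_numeral)
  have "(int v + dw) mod int n = (int v + du + e) mod int n"
    using e(2) halve[of "int v + dw" 0] halve[of "int v + du" e] dw(2) du(2)
    by (simp add: zmod_int add.assoc)
  then have dvd: "int n dvd dw - du - e" by (simp add: mod_eq_dvd_iff algebra_simps)
  have short: "\<bar>dw - du - e\<bar> < int n" using du(1) dw(1) e(1) small by linarith
  have "dw - du - e = 0"
  proof (rule ccontr)
    assume "dw - du - e \<noteq> 0"
    then have "\<bar>int n\<bar> \<le> \<bar>dw - du - e\<bar>" using dvd_imp_le_int dvd by blast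
    then show False using short by simp
  qed
  then have "dw = du + e" by simp
  then show ?thesis using du(2) dw(2) by (simp add: mod_add_left_eq add.assoc)
qed

lemma doubled_cycle_ball_inj:
  assumes "2 * K + 1 < n" "v < 2 * n"
  shows "inj_on (\<lambda>u. u mod n) (ball_r {..<2 * n} (cycle (2 * n)) v K)"
proof (rule inj_onI)
  fix u w
  assume u: "u \<in> ball_r {..<2 * n} (cycle (2 * n)) v K"
    and w: "w \<in> ball_r {..<2 * n} (cycle (2 * n)) v K" and eq: "u mod n = w mod n"
  have "int (w mod n) = (int u + 0) mod int n"
    using eq by (simp add: zmod_int[symmetric])
  then have "int w = int u mod int (2 * n)"
    using doubled_cycle_ball_offset[OF assms u w, of 0] by simp
  moreover have "u < 2 * n" using u by (simp add: ball_r_def)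
  ultimately show "u = w" by simp
qed

lemma doubled_cycle_ball_edges:
  assumes "2 * K + 1 < n" "v < 2 * n"
    and "u \<in> ball_r {..<2 * n} (cycle (2 * n)) v K" "w \<in> ball_r {..<2 * n} (cycle (2 * n)) v K"
    and "(u mod n, w mod n) \<in> cycle n"
  shows "(u, w) \<in> cycle (2 * n)"
proof -
  have forward: "(a, b) \<in> cycle (2 * n)"
    if "a \<in> ball_r {..<2 * n} (cycle (2 * n)) v K" "b \<in> ball_r {..<2 * n} (cycle (2 * n)) v K"
      and "b mod n = Suc (a mod n) mod n" for a b
  proof -
    have "int (b mod n) = (int a + 1) mod int n"
      using that(3) by (simp add: zmod_int mod_Suc_eq add.commute)
    then have "int b = (int a + 1) mod int (2 * n)"
      using doubled_cycle_ball_offset[OF assms(1,2) that(1,2)] by simp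
    also have "\<dots> = int (Suc a mod (2 * n))" by (simp add: zmod_int add.commute)
    finally have "b = Suc a mod (2 * n)" by (simp only: of_nat_eq_iff)
    then show ?thesis using that(1,2) by (auto simp: cycle_def ball_r_def)
  qed
  from assms(5) consider "w mod n = Suc (u mod n) mod n" | "u mod n = Suc (w mod n) mod n"
    by (auto simp: cycle_def)
  then show ?thesis
  proof cases
    case 1 then show ?thesis using forward assms(3,4) by blast
  next
    case 2 then have "(w, u) \<in> cycle (2 * n)" using forward assms(3,4) by blast
    then show ?thesis using sym_cycle by (meson symD)
  qed
qed

lemma view_of_transfer:
  assumes v: "v \<in> V"
    and img: "f ` ball_r V E v r = ball_r V' E' (f v) r"
    and edges: "\<And>u w. u \<in> ball_r V E v r \<Longrightarrow> w \<in> ball_r V E v r \<Longrightarrow>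
                  (u, w) \<in> E \<longleftrightarrow> (f u, f w) \<in> E'"
    and labels: "\<And>u. u \<in> ball_r V E v r \<Longrightarrow>
                  ids' (f u) = ids u \<and> x' (f u) = x u \<and> y' (f u) = y u"
  shows "view_of V E x y ids v r = view_of V' E' x' y' ids' (f v) r"
proof -
  let ?B = "ball_r V E v r"
  have "v \<in> ?B" using v by (auto simp: ball_r_def intro: exI[of _ 0])
  then have centre: "ids' (f v) = ids v" using labels by blast
  have nodes: "(\<lambda>w. (ids' w, x' w, y' w)) ` ball_r V' E' (f v) r = (\<lambda>u. (ids u, x u, y u)) ` ?B"
    unfolding img[symmetric] image_image using labels by (auto intro: image_cong)
  have links: "{(ids' a, ids' b) |a b. a \<in> ball_r V' E' (f v) r \<and> b \<in> ball_r V' E' (f v) r \<and> (a, b) \<in> E'}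
      = {(ids u, ids w) |u w. u \<in> ?B \<and> w \<in> ?B \<and> (u, w) \<in> E}"
  proof (intro equalityI subsetI)
    fix p assume "p \<in> {(ids' a, ids' b) |a b. a \<in> ball_r V' E' (f v) r \<and> b \<in> ball_r V' E' (f v) r \<and> (a, b) \<in> E'}"
    then obtain a b where ab: "a \<in> f ` ?B" "b \<in> f ` ?B" "(a, b) \<in> E'" "p = (ids' a, ids' b)"
      unfolding img by blast
    then obtain u w where uw: "u \<in> ?B" "w \<in> ?B" "a = f u" "b = f w" by blast
    then have "(u, w) \<in> E" using edges ab(3) by simp
    moreover have "p = (ids u, ids w)" using ab(4) uw labels by simp
    ultimately show "p \<in> {(ids u, ids w) |u w. u \<in> ?B \<and> w \<in> ?B \<and> (u, w) \<in> E}"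
      using uw by blast
  next
    fix p assume "p \<in> {(ids u, ids w) |u w. u \<in> ?B \<and> w \<in> ?B \<and> (u, w) \<in> E}"
    then obtain u w where uw: "u \<in> ?B" "w \<in> ?B" "(u, w) \<in> E" "p = (ids u, ids w)" by blast
    then have "(f u, f w) \<in> E'" using edges by simp
    moreover have "p = (ids' (f u), ids' (f w))" using uw labels by simp
    moreover have "f u \<in> ball_r V' E' (f v) r" "f w \<in> ball_r V' E' (f v) r"
      using uw(1,2) img by blast+
    ultimately show "p \<in> {(ids' a, ids' b) |a b. a \<in> ball_r V' E' (f v) r \<and> b \<in> ball_r V' E' (f v) r \<and> (a, b) \<in> E'}"
      by blast
  qed
  show ?thesis unfolding view_of_def Let_def using centre nodes links by simp
qed

lemma output_of_agree:
  assumes same: "\<And>r. r \<le> K \<Longrightarrow> view_of V E x y ids v r = view_of V' E' x' y' ids' v' r"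
    and halts: "s \<le> K" "halt (view_of V' E' x' y' ids' v' s)"
  shows "output_of halt out V E x y ids v = output_of halt out V' E' x' y' ids' v'"
proof -
  define L where "L = (LEAST r. halt (view_of V' E' x' y' ids' v' r))"
  have "L \<le> s" unfolding L_def using halts(2) by (rule Least_le)
  then have LK: "L \<le> K" using halts(1) by simp
  have "halt (view_of V' E' x' y' ids' v' L)" unfolding L_def using halts(2) by (rule LeastI)
  then have least: "(LEAST r. halt (view_of V E x y ids v r)) = L"
  proof (intro Least_equality)
    fix r assume "halt (view_of V E x y ids v r)"
    then show "L \<le> r" using same[of r] LK unfolding L_def by (cases "r \<le> K") (auto intro: Least_le)
  qed (use same LK in simp)
  have "output_of halt out V E x y ids v = out (view_of V E x y ids v L)"
    unfolding output_of_def least ..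
  also have "\<dots> = out (view_of V' E' x' y' ids' v' L)" using same[OF LK] by simp
  also have "\<dots> = output_of halt out V' E' x' y' ids' v'"
    unfolding output_of_def L_def ..
  finally show ?thesis .
qed

lemma extend_identities:
  fixes f :: "'a \<Rightarrow> nat" and ids :: "'a \<Rightarrow> nat"
  assumes "finite B" "inj_on f B" "inj_on ids B"
  shows "\<exists>ids'. inj ids' \<and> (\<forall>u\<in>B. ids' (f u) = ids u)"
proof -
  obtain M where M: "\<forall>u\<in>B. ids u < M"
    using assms(1) finite_nat_set_iff_bounded[of "ids ` B"] by auto
  define ids' where "ids' w = (if w \<in> f ` B then ids (inv_into B f w) else M + w)" for w
  have inside: "ids' w = ids (inv_into B f w)" "inv_into B f w \<in> B" "ids' w < M"
    if "w \<in> f ` B" for w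
    using that M inv_into_into[OF that] by (simp_all add: ids'_def)
  have outside: "ids' w = M + w" if "w \<notin> f ` B" for w
    using that by (simp add: ids'_def)
  have "inj ids'"
  proof (rule injI)
    fix a b assume eq: "ids' a = ids' b"
    show "a = b"
    proof (cases "a \<in> f ` B \<and> b \<in> f ` B")
      case True
      then have "inv_into B f a = inv_into B f b"
        using eq inside assms(3) by (metis inj_onD)
      then show ?thesis using True f_inv_into_f by metis
    next
      case False
      then consider "a \<in> f ` B" "b \<notin> f ` B" | "a \<notin> f ` B" "b \<in> f ` B"
        | "a \<notin> f ` B" "b \<notin> f ` B" by blast
      then show ?thesis
      proof cases
        case 1
        then have "ids' a < ids' b" using inside(3)[of a] outside[of b] by simp
        then show ?thesis using eq by simp
      next
        case 2
        then have "ids' b < ids' a" using inside(3)[of b] outside[of a] by simp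
        then show ?thesis using eq by simp
      next
        case 3
        then show ?thesis using eq outside by simp
      qed
    qed
  qed
  moreover have "\<forall>u\<in>B. ids' (f u) = ids u" using assms(2) by (simp add: ids'_def)
  ultimately show ?thesis by blast
qed

lemma sublinear_eventually_small:
  fixes t :: time_fn and \<epsilon> :: real
  assumes "sublinear t" "0 < \<epsilon>"
  shows "\<forall>\<^sub>F n in sequentially. \<forall>V E x ids. is_graph V E \<and> inj_on ids V \<and> card V = n
           \<longrightarrow> real (t V E x ids) < \<epsilon> * real n"
proof -
  from assms(1) obtain g :: "nat \<Rightarrow> real" where g: "(\<lambda>n. g n / real n) \<longlonglongrightarrow> 0"
    "\<And>V E x ids. is_graph V E \<Longrightarrow> inj_on ids V \<Longrightarrow> real (t V E x ids) \<le> g (card V)"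
    unfolding sublinear_def by blast
  have "\<forall>\<^sub>F n in sequentially. g n / real n < \<epsilon> \<and> 0 < n"
    using order_tendstoD(2)[OF g(1) assms(2)] eventually_gt_at_top[of 0]
    by (rule eventually_conj)
  then show ?thesis
  proof (rule eventually_mono)
    fix n :: nat assume "g n / real n < \<epsilon> \<and> 0 < n"
    then have gn: "g n < \<epsilon> * real n" by (simp add: divide_less_eq)
    show "\<forall>V E x ids. is_graph V E \<and> inj_on ids V \<and> card V = n
           \<longrightarrow> real (t V E x ids) < \<epsilon> * real n"
    proof (intro allI impI)
      fix V E x and ids :: "nat \<Rightarrow> nat" assume "is_graph V E \<and> inj_on ids V \<and> card V = n"
      then have "real (t V E x ids) \<le> g n" using g(2) by blast
      then show "real (t V E x ids) < \<epsilon> * real n" using gn by linarith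
    qed
  qed
qed

lemma bin_double: "0 < n \<Longrightarrow> bin (2 * n) = bin n @ [False]"
  by (subst bin.simps) simp

lemma doubled_cycle_indistinguishable:
  assumes small: "2 * K + 1 < n" and v: "v < 2 * n"
  shows "\<exists>ids. inj ids \<and> (\<forall>r \<le> K.
           view_of {..<2 * n} (cycle (2 * n)) (\<lambda>u. x (u mod n)) (\<lambda>u. y (u mod n)) id v r
         = view_of {..<n} (cycle n) x y ids (v mod n) r)"
proof -
  let ?B = "ball_r {..<2 * n} (cycle (2 * n)) v K"
  have "finite ?B" by (rule finite_subset[of _ "{..<2 * n}"]) (auto simp: ball_r_def)
  then obtain ids where ids: "inj ids" "\<forall>u\<in>?B. ids (u mod n) = u"
    using extend_identities[OF _ doubled_cycle_ball_inj[OF small v] inj_on_id] by auto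
  have "view_of {..<2 * n} (cycle (2 * n)) (\<lambda>u. x (u mod n)) (\<lambda>u. y (u mod n)) id v r
      = view_of {..<n} (cycle n) x y ids (v mod n) r" if "r \<le> K" for r
  proof (rule view_of_transfer)
    have inner: "ball_r {..<2 * n} (cycle (2 * n)) v r \<subseteq> ?B"
      using that by (auto simp: ball_r_def intro: le_trans)
    show "v \<in> {..<2 * n}" using v by simp
    show "(\<lambda>u. u mod n) ` ball_r {..<2 * n} (cycle (2 * n)) v r = ball_r {..<n} (cycle n) (v mod n) r"
      using cycle_cover_ball[OF v] .
    show "(u, w) \<in> cycle (2 * n) \<longleftrightarrow> (u mod n, w mod n) \<in> cycle n"
      if "u \<in> ball_r {..<2 * n} (cycle (2 * n)) v r" "w \<in> ball_r {..<2 * n} (cycle (2 * n)) v r"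
      for u w
      using that inner cycle_cover_edge[of u w n] doubled_cycle_ball_edges[OF small v, of u w] small
      by auto
    show "ids (u mod n) = id u \<and> x (u mod n) = x (u mod n) \<and> y (u mod n) = y (u mod n)"
      if "u \<in> ball_r {..<2 * n} (cycle (2 * n)) v r" for u
      using that inner ids(2) by auto
  qed
  then show ?thesis using ids(1) by blast
qed

lemma cycle_yes_instance: "3 \<le> n \<Longrightarrow> ({..<n}, cycle n, \<lambda>_. bin n) \<in> InpEqSize"
  using cycle_is_graph by (simp add: InpEqSize_def)

lemma doubled_cycle_no_instance: "0 < n \<Longrightarrow> ({..<2 * n}, cycle (2 * n), \<lambda>_. bin n) \<notin> InpEqSize"
  using bin_double[of n] by (force simp: InpEqSize_def)

lemma sublinear_fast_cycle:
  fixes t :: time_fn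
  assumes "sublinear t"
  obtains n where "3 \<le> n" "\<And>x ids. inj_on ids {..<n} \<Longrightarrow> 4 * t {..<n} (cycle n) x ids < n"
proof -
  have "\<forall>\<^sub>F n in sequentially. 3 \<le> n \<and> (\<forall>V E x ids. is_graph V E \<and> inj_on ids V \<and> card V = n
           \<longrightarrow> real (t V E x ids) < 1 / 4 * real n)"
    by (intro eventually_conj eventually_ge_at_top sublinear_eventually_small[OF assms]) simp
  then obtain n where n: "3 \<le> n" and fast: "\<forall>V E x ids. is_graph V E \<and> inj_on ids V
      \<and> card V = n \<longrightarrow> real (t V E x ids) < 1 / 4 * real n"
    unfolding eventually_sequentially by blast
  have "4 * t {..<n} (cycle n) x ids < n" if "inj_on ids {..<n}" for x ids
  proof -
    have "real (t {..<n} (cycle n) x ids) < 1 / 4 * real n"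
      using fast cycle_is_graph[OF n] that by simp
    then show ?thesis by linarith
  qed
  with n show thesis by (rule that)
qed

theorem theorem3:
  fixes t :: time_fn
  assumes "time_bound t" and "sublinear t"
  shows "InpEqSize \<notin> NLD t"
proof
  assume "InpEqSize \<in> NLD t"
  then obtain halt out where "verifies halt out t InpEqSize" by (auto simp: NLD_def)
  then have halts: "\<And>V E x y ids v. is_graph V E \<Longrightarrow> inj_on ids V \<Longrightarrow> v \<in> V \<Longrightarrow>
                      \<exists>r \<le> t V E x ids. halt (view_of V E x y ids v r)"
    and accept: "\<And>V E x. is_graph V E \<Longrightarrow> (V, E, x) \<in> InpEqSize \<Longrightarrow>
                   \<exists>y. \<forall>ids. inj_on ids V \<longrightarrow> (\<forall>v\<in>V. output_of halt out V E x y ids v)"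
    and reject: "\<And>V E x y ids. is_graph V E \<Longrightarrow> (V, E, x) \<notin> InpEqSize \<Longrightarrow> inj_on ids V \<Longrightarrow>
                   \<exists>v\<in>V. \<not> output_of halt out V E x y ids v"
    unfolding verifies_def by simp_all
  obtain n where n: "3 \<le> n" and fast: "\<And>x ids. inj_on ids {..<n} \<Longrightarrow> 4 * t {..<n} (cycle n) x ids < n"
    using sublinear_fast_cycle[OF assms(2)] by blast
  define K where "K = (n - 1) div 4"
  have small: "2 * K + 1 < n" using n unfolding K_def by linarith
  define x :: "nat \<Rightarrow> bits" where "x = (\<lambda>_. bin n)"
  obtain y where accepts: "\<And>ids v. inj_on ids {..<n} \<Longrightarrow> v < n \<Longrightarrow> output_of halt out {..<n} (cycle n) x y ids v"
    using accept[OF cycle_is_graph[OF n] cycle_yes_instance[OF n]] unfolding x_def by blast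
  have doubled: "is_graph {..<2 * n} (cycle (2 * n))" using n by (intro cycle_is_graph) simp
  have "({..<2 * n}, cycle (2 * n), x) \<notin> InpEqSize"
    using doubled_cycle_no_instance n unfolding x_def by simp
  from reject[OF doubled this inj_on_id, of "\<lambda>u. y (u mod n)"] obtain v where v: "v < 2 * n"
    and rejects: "\<not> output_of halt out {..<2 * n} (cycle (2 * n)) x (\<lambda>u. y (u mod n)) id v"
    by auto
  obtain ids where ids: "inj ids" and same: "\<And>r. r \<le> K \<Longrightarrow>
      view_of {..<2 * n} (cycle (2 * n)) x (\<lambda>u. y (u mod n)) id v r
    = view_of {..<n} (cycle n) x y ids (v mod n) r"
    using doubled_cycle_indistinguishable[OF small v, of x y] by (auto simp: x_def)
  have inj: "inj_on ids {..<n}" using ids by (rule inj_on_subset) simp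
  have vn: "v mod n < n" using n by simp
  then obtain r1 where "r1 \<le> t {..<n} (cycle n) x ids"
    and halt: "halt (view_of {..<n} (cycle n) x y ids (v mod n) r1)"
    using halts[OF cycle_is_graph[OF n] inj] by blast
  then have rK: "r1 \<le> K" using fast[OF inj, of x] unfolding K_def by linarith
  have "output_of halt out {..<2 * n} (cycle (2 * n)) x (\<lambda>u. y (u mod n)) id v
           = output_of halt out {..<n} (cycle n) x y ids (v mod n)"
    by (rule output_of_agree[where K = K and s = r1]) (simp_all add: same rK halt)
  then show False using accepts[OF inj vn] rejects by blast
qed

end
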